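(* Let $n\ge2$ and let $A\in\mathbb{R}^{n\times n}$ be a nonnegative weighted shift matrix: $A_{i,i+1}=c_i\ge 0$ for $i=1,\dots,n-1$ and $A_{ij}=0$ otherwise, with $c_i>0$ for at least one $i$. Then $r(t):=r\big((1-t)A+tA^{\top}\big)$ is strictly concave in $t$ on $(0,1)$.
   Context: $r(M)$ denotes the spectral radius of a square matrix $M$; the function $t\mapsto r((1-t)A+tA^\top)$ is called Levinger's function of $A$. *)

theory Defs
  imports "Jordan_Normal_Form.Spectral_Radius"
begin

definition shift_mat :: "nat \<Rightarrow> (nat \<Rightarrow> real) \<Rightarrow> real mat" where
  "shift_mat n c = mat n n (\<lambda>(i, j). if j = Suc i then c i else 0)"

definition levinger :: "real mat \<Rightarrow> real \<Rightarrow> real" where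
  "levinger A t = spectral_radius (map_mat complex_of_real ((1 - t) \<cdot>\<^sub>m A + t \<cdot>\<^sub>m transpose_mat A))"

definition strictly_concave_on :: "real set \<Rightarrow> (real \<Rightarrow> real) \<Rightarrow> bool" where
  "strictly_concave_on S f \<longleftrightarrow>
     (\<forall>x\<in>S. \<forall>y\<in>S. \<forall>u::real. x \<noteq> y \<and> 0 < u \<and> u < 1 \<longrightarrow>
        u * f x + (1 - u) * f y < f (u * x + (1 - u) * y))"

end

theory Submission
  imports Defs
begin

text \<open>For \<open>0 < t < 1\<close>, conjugating \<open>(1 - t) A + t A\<^sup>T\<close> by \<open>diag(r\<^sup>i)\<close> with
  \<open>r = sqrt ((1 - t) / t)\<close> scales the entry \<open>(i, j)\<close> by \<open>r\<^bsup>j - i\<^esup>\<close> and yields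
  \<open>sqrt (t (1 - t)) (A + A\<^sup>T)\<close>; hence Levinger's function equals \<open>sqrt (t (1 - t)) \<rho>\<close>
  with \<open>\<rho>\<close> the spectral radius of \<open>A + A\<^sup>T\<close>. This symmetric matrix is real and nonzero,
  so \<open>\<rho> > 0\<close>: otherwise all its eigenvalues would vanish, and by a Schur triangularisation
  the trace of its square, which is the sum of the squares of its entries, would vanish. Strict concavity is
  then inherited from \<open>sqrt (t (1 - t))\<close>.\<close>

definition mat_trace :: "'a :: comm_monoid_add mat \<Rightarrow> 'a" where
  "mat_trace A = (\<Sum>i<dim_row A. A $$ (i, i))"

lemma mat_trace_mult_comm:
  fixes A :: "'a :: comm_semiring_0 mat"
  assumes "A \<in> carrier_mat n m" "B \<in> carrier_mat m n"
  shows "mat_trace (A * B) = mat_trace (B * A)"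
proof -
  have "mat_trace (A * B) = (\<Sum>i<n. \<Sum>k<m. A $$ (i, k) * B $$ (k, i))"
    using assms by (auto simp: mat_trace_def scalar_prod_def lessThan_atLeast0 intro!: sum.cong)
  also have "\<dots> = (\<Sum>k<m. \<Sum>i<n. B $$ (k, i) * A $$ (i, k))"
    by (subst sum.swap) (simp add: ac_simps)
  also have "\<dots> = mat_trace (B * A)"
    using assms by (auto simp: mat_trace_def scalar_prod_def lessThan_atLeast0 intro!: sum.cong)
  finally show ?thesis .
qed

lemma mat_trace_similar_mat_wit:
  fixes A :: "'a :: comm_semiring_1 mat"
  assumes "similar_mat_wit A B P Q"
  shows "mat_trace A = mat_trace B"
proof -
  obtain n where car: "{A, B, P, Q} \<subseteq> carrier_mat n n" and QP: "Q * P = 1\<^sub>m n" and A: "A = P * B * Q"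
    using assms unfolding similar_mat_wit_def Let_def by blast
  have "mat_trace A = mat_trace (Q * (P * B))"
    unfolding A using car by (intro mat_trace_mult_comm) auto
  also have "Q * (P * B) = B"
    using car QP by (auto simp: assoc_mult_mat[of Q n n P n B n, symmetric])
  finally show ?thesis .
qed

lemma mat_trace_square_upper_triangular:
  fixes B :: "'a :: comm_semiring_1 mat"
  assumes "B \<in> carrier_mat n n" "upper_triangular B"
  shows "mat_trace (B * B) = (\<Sum>i<n. (B $$ (i, i))\<^sup>2)"
proof -
  have "B $$ (i, k) * B $$ (k, i) = (if k = i then (B $$ (i, i))\<^sup>2 else 0)" if "i < n" "k < n" for i k
    using assms that upper_triangularD[OF assms(2)]
    by (cases i k rule: linorder_cases) (auto simp: power2_eq_square)
  then show ?thesis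
    using assms by (auto simp: mat_trace_def scalar_prod_def lessThan_atLeast0 intro!: sum.cong)
qed

lemma spectrum_subset_0_imp_mat_trace_square_eq_0:
  fixes A :: "complex mat"
  assumes A: "A \<in> carrier_mat n n" and spec: "spectrum A \<subseteq> {0}"
  shows "mat_trace (A * A) = 0"
proof -
  obtain es where es: "char_poly A = (\<Prod>e\<leftarrow>es. [:- e, 1:])"
    using char_poly_factorized[OF A] by blast
  obtain B P Q where BPQ: "schur_decomposition A es = (B, P, Q)"
    using prod_cases3 by blast
  have wit: "similar_mat_wit A B P Q" and ut: "upper_triangular B" and diag: "diag_mat B = es"
    using schur_decomposition[OF A es BPQ] by blast+
  note W = similar_mat_witD2[OF A wit]
  have "e \<in> spectrum A" if "e \<in> set es" for e
    using that unfolding spectrum_root_char_poly[OF A] es by (induct es) auto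
  moreover have "B $$ (i, i) \<in> set es" if "i < n" for i
    using that diag W(5) unfolding diag_mat_def by auto
  ultimately have diag0: "B $$ (i, i) = 0" if "i < n" for i
    using that spec by blast
  have "similar_mat_wit (A * A) (B * B) P Q"
    using similar_mat_wit_pow[OF wit, of 2] W by (simp add: numeral_2_eq_2)
  then have "mat_trace (A * A) = mat_trace (B * B)"
    by (rule mat_trace_similar_mat_wit)
  also have "\<dots> = 0"
    using mat_trace_square_upper_triangular[OF W(5) ut] diag0 by simp
  finally show ?thesis .
qed

lemma mat_trace_square_symmetric:
  fixes S :: "'a :: comm_semiring_1 mat"
  assumes "S \<in> carrier_mat n n" "transpose_mat S = S"
  shows "mat_trace (S * S) = (\<Sum>i<n. \<Sum>j<n. (S $$ (i, j))\<^sup>2)"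
proof -
  have "S $$ (j, i) = S $$ (i, j)" if "i < n" "j < n" for i j
    using assms that by (metis carrier_matD index_transpose_mat(1))
  then show ?thesis
    using assms by (auto simp: mat_trace_def scalar_prod_def lessThan_atLeast0 power2_eq_square
        intro!: sum.cong)
qed

lemma spectral_radius_symmetric_pos:
  fixes S :: "real mat"
  assumes S: "S \<in> carrier_mat n n" and sym: "transpose_mat S = S" and nonzero: "S \<noteq> 0\<^sub>m n n"
  shows "spectral_radius (map_mat complex_of_real S) > 0"
proof (rule ccontr)
  let ?S = "map_mat complex_of_real S"
  assume "\<not> spectral_radius ?S > 0"
  have "\<exists>i<n. \<exists>j<n. S $$ (i, j) \<noteq> 0"
  proof (rule ccontr)
    assume "\<not> ?thesis"
    then have "S = 0\<^sub>m n n"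
      using S by (intro eq_matI) auto
    with nonzero show False ..
  qed
  then obtain i j where ij: "i < n" "j < n" "S $$ (i, j) \<noteq> 0"
    by blast
  have "spectrum ?S \<subseteq> {0}"
  proof
    fix e assume "e \<in> spectrum ?S"
    then have "norm e \<le> spectral_radius ?S"
      using spectral_radius_mem_max(2)[of ?S n] S ij by simp
    with \<open>\<not> spectral_radius ?S > 0\<close> have "norm e \<le> 0"
      by linarith
    then show "e \<in> {0}"
      by simp
  qed
  then have "mat_trace (?S * ?S) = 0"
    using S by (intro spectrum_subset_0_imp_mat_trace_square_eq_0[of _ n]) auto
  moreover have "mat_trace (?S * ?S) = complex_of_real (mat_trace (S * S))"
    using S by (simp add: of_real_hom.mat_hom_mult[OF S S, symmetric] mat_trace_def)
  ultimately have trace0: "mat_trace (S * S) = 0" by simp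
  have "0 < (S $$ (i, j))\<^sup>2"
    using ij by simp
  also have "\<dots> \<le> (\<Sum>j<n. (S $$ (i, j))\<^sup>2)"
    using ij by (intro member_le_sum) auto
  also have "\<dots> \<le> (\<Sum>i<n. \<Sum>j<n. (S $$ (i, j))\<^sup>2)"
    using ij by (intro member_le_sum[of i _ "\<lambda>i. \<Sum>j<n. (S $$ (i, j))\<^sup>2"] sum_nonneg) auto
  also have "\<dots> = mat_trace (S * S)"
    using mat_trace_square_symmetric[OF S sym] by simp
  finally show False
    using trace0 by simp
qed

lemma spectrum_smult:
  fixes A :: "'a :: field mat"
  assumes A: "A \<in> carrier_mat n n" and k: "k \<noteq> 0"
  shows "spectrum (k \<cdot>\<^sub>m A) = (\<lambda>e. k * e) ` spectrum A"
proof -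
  have cancel: "k \<cdot>\<^sub>v w = k \<cdot>\<^sub>v u \<longleftrightarrow> w = u" for w u :: "'a vec"
  proof
    assume "k \<cdot>\<^sub>v w = k \<cdot>\<^sub>v u"
    then have "inverse k \<cdot>\<^sub>v (k \<cdot>\<^sub>v w) = inverse k \<cdot>\<^sub>v (k \<cdot>\<^sub>v u)" by simp
    then show "w = u" using k by (simp add: smult_smult_assoc)
  qed simp
  have "(k \<cdot>\<^sub>m A) *\<^sub>v v = k \<cdot>\<^sub>v (A *\<^sub>v v)" if "v \<in> carrier_vec n" for v
    using A that by (intro eq_vecI) (auto simp: scalar_prod_def sum_distrib_left ac_simps)
  then have "eigenvector (k \<cdot>\<^sub>m A) v (k * e) \<longleftrightarrow> eigenvector A v e" for v e
    using A cancel[of "A *\<^sub>v v" "e \<cdot>\<^sub>v v"] by (auto simp: eigenvector_def smult_smult_assoc)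
  then have scaled: "k * e \<in> spectrum (k \<cdot>\<^sub>m A) \<longleftrightarrow> e \<in> spectrum A" for e
    unfolding spectrum_def eigenvalue_def by blast
  show ?thesis
  proof (intro Set.set_eqI iffI)
    fix x assume "x \<in> spectrum (k \<cdot>\<^sub>m A)"
    moreover have "x = k * (x / k)"
      using k by simp
    ultimately show "x \<in> (\<lambda>e. k * e) ` spectrum A"
      using scaled[of "x / k"] by force
  qed (use scaled in auto)
qed

lemma spectral_radius_smult:
  assumes A: "A \<in> carrier_mat n n" and n: "n > 0" and k: "k \<noteq> 0"
  shows "spectral_radius (k \<cdot>\<^sub>m A) = norm k * spectral_radius A"
proof -
  have "norm ` spectrum (k \<cdot>\<^sub>m A) = (\<lambda>y. norm k * y) ` (norm ` spectrum A)"
    unfolding spectrum_smult[OF A k] image_image by (simp add: norm_mult)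
  moreover have "mono (\<lambda>y. norm k * y)"
    by (intro monoI mult_left_mono) auto
  ultimately show ?thesis
    unfolding spectral_radius_def using card_finite_spectrum[OF A] spectrum_non_empty[OF A n]
    by (simp add: mono_Max_commute)
qed

lemma spectral_radius_of_real_similar:
  fixes A B :: "real mat"
  assumes "similar_mat A B"
  shows "spectral_radius (map_mat complex_of_real A) = spectral_radius (map_mat complex_of_real B)"
proof -
  obtain n where A: "A \<in> carrier_mat n n" and B: "B \<in> carrier_mat n n"
    using similar_matD[OF assms] by auto
  have "char_poly (map_mat complex_of_real A) = char_poly (map_mat complex_of_real B)"
    unfolding of_real_hom.char_poly_hom[OF A] of_real_hom.char_poly_hom[OF B] char_poly_similar[OF assms] ..
  then have "spectrum (map_mat complex_of_real A) = spectrum (map_mat complex_of_real B)"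
    using spectrum_root_char_poly[of "map_mat complex_of_real A" n]
      spectrum_root_char_poly[of "map_mat complex_of_real B" n] A B
    by simp
  then show ?thesis
    unfolding spectral_radius_def by simp
qed

lemma similar_mat_shift_mat_combination:
  assumes a: "0 < a" and b: "0 < b"
  shows "similar_mat (a \<cdot>\<^sub>m shift_mat n c + b \<cdot>\<^sub>m transpose_mat (shift_mat n c))
    (sqrt (a * b) \<cdot>\<^sub>m (shift_mat n c + transpose_mat (shift_mat n c)))"
proof -
  define r where "r = sqrt (a / b)"
  let ?M = "sqrt (a * b) \<cdot>\<^sub>m (shift_mat n c + transpose_mat (shift_mat n c))"
  have "sqrt (a * b) = sqrt (a / b * b\<^sup>2)"
    using b by (simp add: power2_eq_square)
  also have "\<dots> = r * b"
    using b unfolding r_def real_sqrt_mult by simp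
  finally have r: "r > 0" "r * r * b = a" "sqrt (a * b) = r * b"
    using a b by (auto simp: r_def)
  have M: "?M \<in> carrier_mat n n"
    by (simp add: shift_mat_def)
  have "mat_diag n (\<lambda>i. inverse r ^ i) * ?M * mat_diag n (\<lambda>i. r ^ i)
    = mat n n (\<lambda>(i, j). inverse r ^ i * ?M $$ (i, j) * r ^ j)"
    using M by (auto simp: mat_diag_mult_left[of _ n n] mat_diag_mult_right[of _ n n] intro!: eq_matI)
  also have "\<dots> = a \<cdot>\<^sub>m shift_mat n c + b \<cdot>\<^sub>m transpose_mat (shift_mat n c)"
    using r by (auto simp: shift_mat_def field_simps intro!: eq_matI)
  finally show ?thesis
    using M r(1)
    by (intro similar_matI[of _ _ "mat_diag n (\<lambda>i. inverse r ^ i)" "mat_diag n (\<lambda>i. r ^ i)" n])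
      (auto simp: shift_mat_def power_mult_distrib[symmetric])
qed

lemma levinger_shift_mat:
  assumes "0 < t" "t < 1" "n > 0"
  shows "levinger (shift_mat n c) t
    = sqrt (t * (1 - t)) * spectral_radius (map_mat complex_of_real (shift_mat n c + transpose_mat (shift_mat n c)))"
proof -
  let ?S = "shift_mat n c + transpose_mat (shift_mat n c)"
  have S: "map_mat complex_of_real ?S \<in> carrier_mat n n"
    by (simp add: shift_mat_def)
  have "levinger (shift_mat n c) t = spectral_radius (map_mat complex_of_real (sqrt ((1 - t) * t) \<cdot>\<^sub>m ?S))"
    unfolding levinger_def
    by (rule spectral_radius_of_real_similar, rule similar_mat_shift_mat_combination) (use assms in auto)
  also have "map_mat complex_of_real (sqrt ((1 - t) * t) \<cdot>\<^sub>m ?S)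
    = complex_of_real (sqrt ((1 - t) * t)) \<cdot>\<^sub>m map_mat complex_of_real ?S"
    by (rule eq_matI) auto
  also have "spectral_radius \<dots>
    = norm (complex_of_real (sqrt ((1 - t) * t))) * spectral_radius (map_mat complex_of_real ?S)"
    using assms by (intro spectral_radius_smult[OF S]) auto
  finally show ?thesis
    using assms by (simp add: mult.commute)
qed

lemma shift_mat_plus_transpose_nonzero:
  assumes "i < n - 1" "c i \<noteq> 0"
  shows "shift_mat n c + transpose_mat (shift_mat n c) \<noteq> 0\<^sub>m n n"
proof
  assume "shift_mat n c + transpose_mat (shift_mat n c) = 0\<^sub>m n n"
  then have "(shift_mat n c + transpose_mat (shift_mat n c)) $$ (i, Suc i) = 0"
    using assms(1) by simp
  with assms show False
    by (simp add: shift_mat_def)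
qed

lemma strictly_concave_on_parabola: "strictly_concave_on S (\<lambda>t. t * (1 - t))"
proof (unfold strictly_concave_on_def, intro ballI allI impI)
  fix x y u :: real
  assume "x \<noteq> y \<and> 0 < u \<and> u < 1"
  then have "0 < u * (1 - u) * (x - y)\<^sup>2"
    by simp
  moreover have "u * (x * (1 - x)) + (1 - u) * (y * (1 - y))
    = (u * x + (1 - u) * y) * (1 - (u * x + (1 - u) * y)) - u * (1 - u) * (x - y)\<^sup>2"
    by (simp add: power2_eq_square algebra_simps)
  ultimately show "u * (x * (1 - x)) + (1 - u) * (y * (1 - y))
    < (u * x + (1 - u) * y) * (1 - (u * x + (1 - u) * y))"
    by linarith
qed

lemma strictly_concave_on_sqrt:
  assumes conc: "strictly_concave_on S g" and nonneg: "\<And>x. x \<in> S \<Longrightarrow> 0 \<le> g x"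
  shows "strictly_concave_on S (\<lambda>x. sqrt (g x))"
proof (unfold strictly_concave_on_def, intro ballI allI impI)
  fix x y u :: real
  assume x: "x \<in> S" and y: "y \<in> S" and u: "x \<noteq> y \<and> 0 < u \<and> u < 1"
  let ?p = "sqrt (g x)" and ?q = "sqrt (g y)"
  have "(u * ?p + (1 - u) * ?q)\<^sup>2 = u * ?p\<^sup>2 + (1 - u) * ?q\<^sup>2 - u * (1 - u) * (?p - ?q)\<^sup>2"
    by (simp add: power2_eq_square algebra_simps)
  also have "\<dots> \<le> u * g x + (1 - u) * g y"
    using u x y nonneg by simp
  also have "\<dots> < g (u * x + (1 - u) * y)"
    using conc x y u unfolding strictly_concave_on_def by blast
  finally show "u * ?p + (1 - u) * ?q < sqrt (g (u * x + (1 - u) * y))"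
    by (rule real_less_rsqrt)
qed

lemma strictly_concave_on_cmult:
  assumes "0 < k" "strictly_concave_on S f"
  shows "strictly_concave_on S (\<lambda>x. k * f x)"
proof -
  have "u * (k * f x) + (1 - u) * (k * f y) = k * (u * f x + (1 - u) * f y)" for u x y
    by (simp add: algebra_simps)
  then show ?thesis
    using assms unfolding strictly_concave_on_def by simp
qed

lemma strictly_concave_on_cong:
  assumes "strictly_concave_on S f" "\<And>x. x \<in> S \<Longrightarrow> f x = g x"
    and "\<And>x y u. x \<in> S \<Longrightarrow> y \<in> S \<Longrightarrow> 0 < u \<Longrightarrow> u < 1 \<Longrightarrow> u * x + (1 - u) * y \<in> S"
  shows "strictly_concave_on S g"
  using assms unfolding strictly_concave_on_def by metis

lemma convex_combination_in_greaterThanLessThan: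
  fixes a b x y u :: real
  assumes "x \<in> {a<..<b}" "y \<in> {a<..<b}" "0 < u" "u < 1"
  shows "u * x + (1 - u) * y \<in> {a<..<b}"
proof -
  have "u * a + (1 - u) * a < u * x + (1 - u) * y"
    using assms by (intro add_strict_mono mult_strict_left_mono) auto
  moreover have "u * x + (1 - u) * y < u * b + (1 - u) * b"
    using assms by (intro add_strict_mono mult_strict_left_mono) auto
  ultimately show ?thesis
    by (simp add: algebra_simps)
qed

theorem theorem5:
  fixes n :: nat and c :: "nat \<Rightarrow> real"
  assumes "n \<ge> 2"
    and "\<forall>i < n - 1. c i \<ge> 0"
    and "\<exists>i < n - 1. c i > 0"
  shows "strictly_concave_on {0<..<1} (levinger (shift_mat n c))"
proof -
  let ?S = "shift_mat n c + transpose_mat (shift_mat n c)"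
  define R where "R = spectral_radius (map_mat complex_of_real ?S)"
  obtain i where "i < n - 1" "c i \<noteq> 0"
    using assms(3) by force
  then have "?S \<noteq> 0\<^sub>m n n"
    by (rule shift_mat_plus_transpose_nonzero)
  moreover have "?S \<in> carrier_mat n n" "transpose_mat ?S = ?S"
    by (auto simp: shift_mat_def intro!: eq_matI)
  ultimately have "R > 0"
    unfolding R_def by (intro spectral_radius_symmetric_pos)
  then have "strictly_concave_on {0<..<1} (\<lambda>t. R * sqrt (t * (1 - t)))"
    by (intro strictly_concave_on_cmult strictly_concave_on_sqrt strictly_concave_on_parabola) auto
  then show ?thesis
  proof (rule strictly_concave_on_cong)
    fix t :: real
    assume "t \<in> {0<..<1}"
    then show "R * sqrt (t * (1 - t)) = levinger (shift_mat n c) t"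
      using assms(1) by (simp add: levinger_shift_mat R_def)
  qed (use convex_combination_in_greaterThanLessThan in blast)
qed

end
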